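(* Let $G$ be a finite simple graph with no isolated vertices in which every vertex has even degree, and let $C$ be a connected component of $G$. Then either $C$ contains a triangle, or $C$ contains a path of length five (a path with five edges on six distinct vertices), or $C$ is isomorphic to one of: the cycle $C_4$, the cycle $C_5$, or the complete bipartite graph $K_{2,m}$ with $m\ge 4$ even.
   Context: Graphs are undirected, without loops or multiple edges. *)

theory Defs
  imports Main
begin

definition simple_graph :: "'a set \<Rightarrow> ('a \<Rightarrow> 'a \<Rightarrow> bool) \<Rightarrow> bool" where
  "simple_graph V E \<longleftrightarrow> finite V \<and> (\<forall>x y. E x y \<longrightarrow> x \<in> V \<and> y \<in> V)
     \<and> (\<forall>x y. E x y \<longrightarrow> E y x) \<and> (\<forall>x. \<not> E x x)"

definition degree :: "'a set \<Rightarrow> ('a \<Rightarrow> 'a \<Rightarrow> bool) \<Rightarrow> 'a \<Rightarrow> nat" where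
  "degree V E v = card {u \<in> V. E v u}"

definition is_component :: "'a set \<Rightarrow> ('a \<Rightarrow> 'a \<Rightarrow> bool) \<Rightarrow> 'a set \<Rightarrow> bool" where
  "is_component V E C \<longleftrightarrow> (\<exists>v \<in> V. C = {u. E\<^sup>*\<^sup>* v u})"

definition has_triangle :: "'a set \<Rightarrow> ('a \<Rightarrow> 'a \<Rightarrow> bool) \<Rightarrow> bool" where
  "has_triangle C E \<longleftrightarrow> (\<exists>a\<in>C. \<exists>b\<in>C. \<exists>c\<in>C. E a b \<and> E b c \<and> E a c)"

definition has_path :: "'a set \<Rightarrow> ('a \<Rightarrow> 'a \<Rightarrow> bool) \<Rightarrow> nat \<Rightarrow> bool" where
  "has_path C E k \<longleftrightarrow> (\<exists>p. length p = k + 1 \<and> distinct p \<and> set p \<subseteq> C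
      \<and> (\<forall>i<k. E (p ! i) (p ! Suc i)))"

definition graph_iso :: "'a set \<Rightarrow> ('a \<Rightarrow> 'a \<Rightarrow> bool) \<Rightarrow> 'b set \<Rightarrow> ('b \<Rightarrow> 'b \<Rightarrow> bool) \<Rightarrow> bool" where
  "graph_iso C E W F \<longleftrightarrow> (\<exists>f. bij_betw f C W \<and> (\<forall>x\<in>C. \<forall>y\<in>C. E x y \<longleftrightarrow> F (f x) (f y)))"

definition cycle_edge :: "nat \<Rightarrow> nat \<Rightarrow> nat \<Rightarrow> bool" where
  "cycle_edge n i j \<longleftrightarrow> i < n \<and> j < n \<and> (j = (i + 1) mod n \<or> i = (j + 1) mod n)"

definition K2m_edge :: "nat \<Rightarrow> nat \<Rightarrow> nat \<Rightarrow> bool" where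
  "K2m_edge m i j \<longleftrightarrow> i < m + 2 \<and> j < m + 2 \<and> ((i < 2 \<and> 2 \<le> j) \<or> (j < 2 \<and> 2 \<le> i))"

end

(*
  Every vertex has degree at least 2, so a walk in C that never immediately backtracks exists.
  In a triangle-free graph without a path on six vertices such a walk of length five must
  close up into a 4-cycle or a 5-cycle.  A 5-cycle admits no further neighbours, so C is C5.
  For a 4-cycle a-x-b-y, any vertex outside it adjacent to a is adjacent to exactly a and b,
  and outside vertices cannot attach to both diagonal pairs {a,b} and {x,y}.  Hence C is the
  complete bipartite graph between one diagonal pair and its common neighbourhood, whose
  size is the even degree of a: C4 if it is 2, K_{2,m} with m >= 4 otherwise.
*)

theory Submission
  imports Defs
begin

lemma component_closed:
  assumes "is_component V E C" "x \<in> C" "E x y"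
  shows "y \<in> C"
  using assms unfolding is_component_def by (auto intro: rtranclp.rtrancl_into_rtrancl)

lemma component_subset_closed_set:
  assumes "simple_graph V E" "is_component V E C" "a \<in> C" "a \<in> S"
    and closed: "\<And>p q. p \<in> S \<Longrightarrow> E p q \<Longrightarrow> q \<in> S"
  shows "C \<subseteq> S"
proof
  fix u assume "u \<in> C"
  have "symp E" using assms(1) by (simp add: simple_graph_def symp_def)
  then have "symp E\<^sup>*\<^sup>*" by (rule symp_rtranclp)
  then have "E\<^sup>*\<^sup>* a u"
    using assms(2,3) \<open>u \<in> C\<close> unfolding is_component_def
    by (auto intro: rtranclp_trans dest: sympD)
  then show "u \<in> S" by induction (use assms(4) closed in auto)
qed

lemma even_degree_second_neighbour:
  assumes "simple_graph V E" "even (degree V E x)" "E x u"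
  shows "\<exists>w. E x w \<and> w \<noteq> u"
proof (rule ccontr)
  assume "\<nexists>w. E x w \<and> w \<noteq> u"
  moreover have "u \<in> V" using assms(1,3) by (simp add: simple_graph_def)
  ultimately have "{w \<in> V. E x w} = {u}" using assms(3) by blast
  then show False using assms(2) by (simp add: degree_def)
qed

lemma graph_iso_by_enumeration:
  assumes bij: "bij_betw g W C"
    and edges: "\<And>i j. i \<in> W \<Longrightarrow> j \<in> W \<Longrightarrow> E (g i) (g j) \<longleftrightarrow> F i j"
  shows "graph_iso C E W F"
  unfolding graph_iso_def
proof (intro exI conjI ballI)
  let ?f = "the_inv_into W g"
  show inv: "bij_betw ?f C W" using bij by (rule bij_betw_the_inv_into)
  fix x y assume "x \<in> C" "y \<in> C"
  then have "E x y \<longleftrightarrow> E (g (?f x)) (g (?f y))"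
    using bij by (simp add: f_the_inv_into_f_bij_betw)
  also have "\<dots> \<longleftrightarrow> F (?f x) (?f y)"
    using edges bij_betw_apply[OF inv] \<open>x \<in> C\<close> \<open>y \<in> C\<close> by blast
  finally show "E x y \<longleftrightarrow> F (?f x) (?f y)" .
qed

lemma cycle_edge_iff:
  assumes "i < n" "j < n"
  shows "cycle_edge n i j \<longleftrightarrow> j = (i + 1) mod n \<or> j = (i + n - 1) mod n"
proof -
  have "i = (j + 1) mod n \<longleftrightarrow> j = (i + n - 1) mod n"
  proof (cases "i = 0")
    case True
    have "(j + 1) mod n = 0 \<longleftrightarrow> j = n - 1"
      using assms(2) by (cases "j + 1 = n") auto
    then show ?thesis using True assms by simp
  next
    case False
    then have "(i + n - 1) mod n = i - 1" using assms(1) by (simp add: mod_if)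
    moreover have "(j + 1) mod n = i \<longleftrightarrow> j + 1 = i"
      using assms False by (cases "j + 1 = n") auto
    ultimately show ?thesis using False by auto
  qed
  then show ?thesis using assms by (auto simp: cycle_edge_def)
qed

lemma component_iso_cycle:
  assumes "simple_graph V E" "is_component V E C"
    and "set cs \<subseteq> C" "distinct cs" "length cs = n" "0 < n"
    and nbrs: "\<And>i w. i < n \<Longrightarrow> E (cs ! i) w \<longleftrightarrow> w = cs ! ((i + 1) mod n) \<or> w = cs ! ((i + n - 1) mod n)"
  shows "graph_iso C E {0..<n} (cycle_edge n)"
proof (rule graph_iso_by_enumeration)
  have "C \<subseteq> set cs"
  proof (rule component_subset_closed_set[OF assms(1,2)])
    show "cs ! 0 \<in> C" "cs ! 0 \<in> set cs" using assms(3,5,6) by auto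
    fix p q assume "p \<in> set cs" "E p q"
    then obtain i where "i < n" "E (cs ! i) q" using assms(5) by (auto simp: in_set_conv_nth)
    then have "q = cs ! ((i + 1) mod n) \<or> q = cs ! ((i + n - 1) mod n)" using nbrs by blast
    then show "q \<in> set cs" using assms(5,6) by auto
  qed
  then show "bij_betw ((!) cs) {0..<n} C"
    using assms(3-5) by (auto intro: bij_betw_nth)
  fix i j assume "i \<in> {0..<n}" "j \<in> {0..<n}"
  then show "E (cs ! i) (cs ! j) \<longleftrightarrow> cycle_edge n i j"
    using assms(4-6) by (simp add: nbrs cycle_edge_iff nth_eq_iff_index_eq)
qed

lemma graph_iso_K2m:
  assumes "a \<noteq> b" "a \<notin> T" "b \<notin> T" "finite T"
    and edges: "\<And>p q. p \<in> {a, b} \<union> T \<Longrightarrow> q \<in> {a, b} \<union> T \<Longrightarrow>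
      E p q \<longleftrightarrow> (p \<in> {a, b} \<and> q \<in> T) \<or> (q \<in> {a, b} \<and> p \<in> T)"
  shows "graph_iso ({a, b} \<union> T) E {0..<card T + 2} (K2m_edge (card T))"
proof -
  obtain h where h: "bij_betw h {0..<card T} T" using ex_bij_betw_nat_finite[OF assms(4)] by blast
  define g where "g i = (if i = 0 then a else if i = 1 then b else h (i - 2))" for i
  have "bij_betw (\<lambda>i. i - 2) {2..<card T + 2} {0..<card T}"
    by (rule bij_betw_byWitness[where f' = "\<lambda>i. i + 2"]) auto
  then have "bij_betw (h \<circ> (\<lambda>i. i - 2)) {2..<card T + 2} T" using h by (rule bij_betw_trans)
  then have "bij_betw g {2..<card T + 2} T" by (rule bij_betw_cong[THEN iffD1, rotated]) (auto simp: g_def)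
  moreover have "bij_betw g {0, 1} {a, b}" using assms(1) by (auto simp: g_def bij_betw_def)
  ultimately have "bij_betw g ({0, 1} \<union> {2..<card T + 2}) ({a, b} \<union> T)"
    using assms(2,3) by (intro bij_betw_combine) auto
  moreover have "{0, 1} \<union> {2..<card T + 2} = {0..<card T + 2}" by auto
  ultimately have bij: "bij_betw g {0..<card T + 2} ({a, b} \<union> T)" by simp
  show ?thesis
  proof (rule graph_iso_by_enumeration[OF bij])
    fix i j assume ij: "i \<in> {0..<card T + 2}" "j \<in> {0..<card T + 2}"
    have side: "(g k \<in> {a, b} \<longleftrightarrow> k < 2) \<and> (g k \<in> T \<longleftrightarrow> \<not> k < 2)" if "k \<in> {0..<card T + 2}" for k
    proof (cases "k < 2")
      case True
      then have "k = 0 \<or> k = 1" by auto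
      then show ?thesis
        using assms(2,3) by (auto simp: g_def)
    next
      case False
      then have "g k \<in> T" using that bij_betw_apply[OF h, of "k - 2"] by (simp add: g_def)
      then show ?thesis
        using assms(2,3) False by auto
    qed
    show "E (g i) (g j) \<longleftrightarrow> K2m_edge (card T) i j"
      using ij side[OF ij(1)] side[OF ij(2)] edges[OF bij_betw_apply[OF bij ij(1)] bij_betw_apply[OF bij ij(2)]]
      by (auto simp: K2m_edge_def)
  qed
qed

locale triangle_P6_free_component =
  fixes V :: "'a set" and E :: "'a \<Rightarrow> 'a \<Rightarrow> bool" and C :: "'a set"
  assumes simple: "simple_graph V E"
    and no_isolated: "\<forall>v\<in>V. \<exists>u. E v u"
    and even_degree: "\<forall>v\<in>V. even (degree V E v)"
    and component: "is_component V E C"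
    and triangle_free: "\<not> has_triangle C E"
    and P6_free: "\<not> has_path C E 5"
begin

lemma sym: "E x y \<Longrightarrow> E y x"
  using simple by (simp add: simple_graph_def)

lemma irrefl: "\<not> E x x"
  using simple by (simp add: simple_graph_def)

lemma closed: "x \<in> C \<Longrightarrow> E x y \<Longrightarrow> y \<in> C"
  using component by (rule component_closed)

lemma second_neighbour: "E x u \<Longrightarrow> \<exists>w. E x w \<and> w \<noteq> u"
  using simple even_degree by (auto simp: simple_graph_def intro: even_degree_second_neighbour)

lemma finite_neighbourhood: "finite {t. E a t}"
  using simple finite_subset unfolding simple_graph_def by (metis mem_Collect_eq subsetI)

lemma even_card_neighbourhood: "even (card {t. E a t})"
proof (cases "a \<in> V")
  case True
  moreover have "{t. E a t} = {u \<in> V. E a u}" using simple unfolding simple_graph_def by blast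
  ultimately show ?thesis using even_degree by (simp add: degree_def)
next
  case False
  then have "{t. E a t} = {}" using simple unfolding simple_graph_def by blast
  then show ?thesis by simp
qed

lemma no_triangle: "a \<in> C \<Longrightarrow> E a b \<Longrightarrow> E b c \<Longrightarrow> E a c \<Longrightarrow> False"
  using triangle_free closed unfolding has_triangle_def by blast

lemma no_path6:
  assumes "a0 \<in> C" "E a0 a1" "E a1 a2" "E a2 a3" "E a3 a4" "E a4 a5"
    and "distinct [a0, a1, a2, a3, a4, a5]"
  shows False
proof -
  let ?p = "[a0, a1, a2, a3, a4, a5]"
  have "a1 \<in> C" "a2 \<in> C" "a3 \<in> C" "a4 \<in> C" "a5 \<in> C" using assms(1-6) closed by blast+
  then have "set ?p \<subseteq> C" using assms(1) by simp
  moreover have "E (?p ! i) (?p ! Suc i)" if "i < 5" for i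
    using that assms(2-6) by (auto simp: less_Suc_eq numeral_eq_Suc)
  ultimately have "has_path C E 5" using assms(7) unfolding has_path_def by (intro exI[of _ ?p]) auto
  then show False using P6_free by simp
qed

definition square :: "'a \<Rightarrow> 'a \<Rightarrow> 'a \<Rightarrow> 'a \<Rightarrow> bool" where
  "square a x b y \<longleftrightarrow> a \<in> C \<and> distinct [a, x, b, y] \<and> E a x \<and> E x b \<and> E b y \<and> E y a"

definition pentagon :: "'a \<Rightarrow> 'a \<Rightarrow> 'a \<Rightarrow> 'a \<Rightarrow> 'a \<Rightarrow> bool" where
  "pentagon c0 c1 c2 c3 c4 \<longleftrightarrow>
    c0 \<in> C \<and> distinct [c0, c1, c2, c3, c4] \<and> E c0 c1 \<and> E c1 c2 \<and> E c2 c3 \<and> E c3 c4 \<and> E c4 c0"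

lemma square_or_pentagon:
  "(\<exists>a x b y. square a x b y) \<or> (\<exists>c0 c1 c2 c3 c4. pentagon c0 c1 c2 c3 c4)"
proof -
  obtain p0 p1 where p0: "p0 \<in> C" and e1: "E p0 p1"
    using component no_isolated unfolding is_component_def by blast
  obtain p2 where e2: "E p1 p2" "p2 \<noteq> p0" using second_neighbour[OF sym[OF e1]] by blast
  obtain p3 where e3: "E p2 p3" "p3 \<noteq> p1" using second_neighbour[OF sym[OF e2(1)]] by blast
  obtain p4 where e4: "E p3 p4" "p4 \<noteq> p2" using second_neighbour[OF sym[OF e3(1)]] by blast
  obtain p5 where e5: "E p4 p5" "p5 \<noteq> p3" using second_neighbour[OF sym[OF e4(1)]] by blast
  have C: "p1 \<in> C" "p2 \<in> C" "p3 \<in> C" "p4 \<in> C"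
    using p0 e1 e2 e3 e4 closed by blast+
  have steps: "p0 \<noteq> p1" "p1 \<noteq> p2" "p2 \<noteq> p3" "p3 \<noteq> p4" "p4 \<noteq> p5"
    using e1 e2 e3 e4 e5 irrefl by auto
  have no_chords: "p3 \<noteq> p0" "p4 \<noteq> p1" "p5 \<noteq> p2"
    using no_triangle[OF p0 e1 e2(1)] no_triangle[OF C(1) e2(1) e3(1)] no_triangle[OF C(2) e3(1) e4(1)]
      e3 e4 e5 sym by blast+
  consider "p4 = p0" | "p5 = p1" | "p5 = p0" | "distinct [p0, p1, p2, p3, p4, p5]"
    using steps no_chords e2(2) e3(2) e4(2) e5(2) by auto
  then show ?thesis
  proof cases
    case 1
    then have "square p0 p1 p2 p3"
      using p0 e1 e2 e3 e4 steps no_chords by (auto simp: square_def)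
    then show ?thesis by blast
  next
    case 2
    then have "square p1 p2 p3 p4"
      using C e2 e3 e4 e5 steps no_chords by (auto simp: square_def)
    then show ?thesis by blast
  next
    case 3
    then have "pentagon p0 p1 p2 p3 p4"
      using p0 e1 e2 e3 e4 e5 steps no_chords by (auto simp: pentagon_def)
    then show ?thesis by blast
  next
    case 4
    then show ?thesis using no_path6[OF p0 e1 e2(1) e3(1) e4(1) e5(1)] by blast
  qed
qed

lemma pentagon_rotate: "pentagon c0 c1 c2 c3 c4 \<Longrightarrow> pentagon c1 c2 c3 c4 c0"
  unfolding pentagon_def using closed by auto

lemma pentagon_neighbours:
  assumes "pentagon c0 c1 c2 c3 c4"
  shows "E c0 w \<longleftrightarrow> w = c1 \<or> w = c4"
proof
  assume w: "E c0 w"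
  note c = assms[unfolded pentagon_def]
  show "w = c1 \<or> w = c4"
  proof (rule ccontr)
    assume "\<not> (w = c1 \<or> w = c4)"
    moreover have "w \<noteq> c0" "w \<noteq> c2" "w \<noteq> c3"
      using w irrefl no_triangle[of c0 c1 c2] no_triangle[of c0 c4 c3] c sym by blast+
    ultimately have "distinct [w, c0, c1, c2, c3, c4]" using c by auto
    then show False using no_path6[OF closed sym[OF w]] w c by blast
  qed
next
  show "w = c1 \<or> w = c4 \<Longrightarrow> E c0 w" using assms sym unfolding pentagon_def by blast
qed

lemma pentagon_component_iso:
  assumes "pentagon c0 c1 c2 c3 c4"
  shows "graph_iso C E {0..<5} (cycle_edge 5)"
proof -
  let ?cs = "[c0, c1, c2, c3, c4]"
  have rotations: "pentagon c1 c2 c3 c4 c0" "pentagon c2 c3 c4 c0 c1"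
    "pentagon c3 c4 c0 c1 c2" "pentagon c4 c0 c1 c2 c3"
    using assms pentagon_rotate by blast+
  have nbrs: "E (?cs ! i) w \<longleftrightarrow> w = ?cs ! ((i + 1) mod 5) \<or> w = ?cs ! ((i + 5 - 1) mod 5)"
    if "i < 5" for i w
  proof -
    have "i = 0 \<or> i = 1 \<or> i = 2 \<or> i = 3 \<or> i = 4" using that by auto
    then show ?thesis
      using pentagon_neighbours[OF assms] pentagon_neighbours[OF rotations(1)]
        pentagon_neighbours[OF rotations(2)] pentagon_neighbours[OF rotations(3)]
        pentagon_neighbours[OF rotations(4)]
      by (elim disjE) simp_all
  qed
  have "set ?cs \<subseteq> C" "distinct ?cs" using assms rotations by (auto simp: pentagon_def)
  then show ?thesis
    by (rule component_iso_cycle[OF simple component]) (simp_all add: nbrs)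
qed

lemma square_rotate: "square a x b y \<Longrightarrow> square x b y a"
  unfolding square_def using closed by auto

lemma squareD:
  assumes "square a x b y"
  shows "a \<in> C" "distinct [a, x, b, y]" "E a x" "E x b" "E b y" "E y a"
    "E x a" "E b x" "E y b" "E a y" "\<not> E a b" "\<not> E x y"
  using assms sym no_triangle[of a x b] no_triangle[of x b y] closed unfolding square_def by blast+

lemma square_outer_neighbour:
  assumes "square a x b y" "z \<notin> {a, x, b, y}" "E z a" "E z w"
  shows "w = a \<or> w = b"
proof (rule ccontr)
  assume "\<not> (w = a \<or> w = b)"
  note s = squareD[OF assms(1)]
  have zC: "z \<in> C" using closed[OF s(1) sym[OF assms(3)]] .
  have "w \<noteq> z" "w \<noteq> x" "w \<noteq> y"
    using assms(3,4) irrefl no_triangle[OF zC assms(3) s(3)] no_triangle[OF zC assms(3) s(10)] by blast+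
  with \<open>\<not> (w = a \<or> w = b)\<close> have "distinct [w, z, a, x, b, y]" using assms(2) s(2) by auto
  then show False using no_path6[OF closed[OF zC assms(4)] sym[OF assms(4)] assms(3) s(3-5)] by blast
qed

lemma square_outer_adjacent_opposite:
  assumes "square a x b y" "z \<notin> {a, x, b, y}" "E z a"
  shows "E z b"
proof -
  obtain w where "E z w" "w \<noteq> a" using second_neighbour[OF assms(3)] by blast
  then show ?thesis using square_outer_neighbour[OF assms] by blast
qed

lemma square_outer_one_side:
  assumes "square a x b y" "z \<notin> {a, x, b, y}" "E z a" "w \<notin> {a, x, b, y}" "E w x"
  shows False
proof -
  note s = squareD[OF assms(1)]
  have "E w y" using square_outer_adjacent_opposite[OF square_rotate[OF assms(1)] _ assms(5)] assms(4) by auto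
  moreover have "z \<noteq> w" using square_outer_neighbour[OF assms(1-3), of x] s(2) assms(5) by auto
  then have "distinct [z, a, x, w, y, b]" using assms(2,4) s(2) by auto
  ultimately show False
    using no_path6[OF closed[OF s(1) sym[OF assms(3)]] assms(3) s(3) sym[OF assms(5)]] s(9) by blast
qed

lemma square_neighbourhoods:
  assumes sq: "square a x b y" and x_closed: "\<And>w. E w x \<Longrightarrow> w \<in> {a, x, b, y}"
  shows "\<And>t w. E a t \<Longrightarrow> E t w \<longleftrightarrow> w = a \<or> w = b" and "\<And>w. E b w \<longleftrightarrow> E a w"
proof -
  note s = squareD[OF sq]
  have sq': "square y a x b" using sq square_rotate by blast
  have x_nbrs: "E x w \<longleftrightarrow> w = a \<or> w = b" for w
    using x_closed[OF sym] s irrefl sym[of x y] by auto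
  have y_nbrs: "E y w \<longleftrightarrow> w = a \<or> w = b" for w
  proof -
    have "w \<in> {a, x, b, y}" if "E y w"
      using that x_closed square_outer_adjacent_opposite[OF sq', of w] sym by blast
    then show ?thesis using s irrefl sym[of y x] by auto
  qed
  show a_nbr_nbrs: "E t w \<longleftrightarrow> w = a \<or> w = b" if "E a t" for t w
  proof (cases "t \<in> {x, y}")
    case True
    then show ?thesis using x_nbrs y_nbrs by blast
  next
    case False
    then have outer: "t \<notin> {a, x, b, y}" using that s(11) irrefl[of a] by auto
    have "E t a" using sym[OF that] .
    then show ?thesis
      using square_outer_neighbour[OF sq outer] square_outer_adjacent_opposite[OF sq outer] by blast
  qed
  have "E a w" if "E b w" for w
  proof (cases "w \<in> {a, x, b, y}")
    case True
    then show ?thesis using that s(3,10,11) irrefl[of b] sym[of b a] by auto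
  next
    case False
    have "square b y a x" using sq' square_rotate by blast
    with False have "E w a" using square_outer_adjacent_opposite[OF _ _ sym[OF that]] by auto
    then show ?thesis by (rule sym)
  qed
  then show "E b w \<longleftrightarrow> E a w" for w using a_nbr_nbrs[of w b] sym[of w b] by blast
qed

lemma square_component_eq:
  assumes sq: "square a x b y" and x_closed: "\<And>w. E w x \<Longrightarrow> w \<in> {a, x, b, y}"
  shows "C = {a, b} \<union> {t. E a t}"
proof
  note s = squareD[OF sq]
  show "C \<subseteq> {a, b} \<union> {t. E a t}"
  proof (rule component_subset_closed_set[OF simple component s(1)])
    fix p q assume "p \<in> {a, b} \<union> {t. E a t}" "E p q"
    then show "q \<in> {a, b} \<union> {t. E a t}" using square_neighbourhoods[OF sq x_closed] by blast
  qed simp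
  show "{a, b} \<union> {t. E a t} \<subseteq> C" using s(1) closed[OF closed[OF s(1) s(3)] s(4)] closed by blast
qed

lemma square_component_iso_closed_side:
  assumes sq: "square a x b y" and x_closed: "\<And>w. E w x \<Longrightarrow> w \<in> {a, x, b, y}"
  shows "graph_iso C E {0..<4} (cycle_edge 4)
    \<or> (\<exists>m. m \<ge> 4 \<and> even m \<and> graph_iso C E {0..<m+2} (K2m_edge m))"
proof -
  note s = squareD[OF sq]
  define T where "T = {t. E a t}"
  have a_nbrs: "E a w \<longleftrightarrow> w \<in> T" for w by (simp add: T_def)
  have T_nbrs: "t \<in> T \<Longrightarrow> E t w \<longleftrightarrow> w = a \<or> w = b" for t w
    using square_neighbourhoods(1)[OF sq x_closed] unfolding T_def by blast
  have b_nbrs: "E b w \<longleftrightarrow> w \<in> T" for w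
    using square_neighbourhoods(2)[OF sq x_closed] unfolding T_def by blast
  have C_eq: "C = {a, b} \<union> T" unfolding T_def by (rule square_component_eq[OF sq x_closed])
  have ab: "a \<notin> T" "b \<notin> T" using irrefl s(11) unfolding T_def by auto
  have xy: "x \<in> T" "y \<in> T" using s unfolding T_def by auto
  show ?thesis
  proof (cases "T = {x, y}")
    case True
    let ?cs = "[a, x, b, y]"
    have nbrs: "E (?cs ! i) w \<longleftrightarrow> w = ?cs ! ((i + 1) mod 4) \<or> w = ?cs ! ((i + 4 - 1) mod 4)"
      if "i < 4" for i w
    proof -
      have "i = 0 \<or> i = 1 \<or> i = 2 \<or> i = 3" using that by auto
      then show ?thesis using a_nbrs[of w] T_nbrs[of x w] T_nbrs[of y w] b_nbrs[of w] xy
        unfolding True by auto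
    qed
    have "set ?cs \<subseteq> C" "distinct ?cs" using C_eq True s(2) by auto
    then have "graph_iso C E {0..<4} (cycle_edge 4)"
      by (rule component_iso_cycle[OF simple component]) (simp_all add: nbrs)
    then show ?thesis ..
  next
    case False
    have "finite T" "even (card T)" unfolding T_def by (rule finite_neighbourhood even_card_neighbourhood)+
    obtain t where t: "t \<in> T" "t \<notin> {x, y}" using False xy by blast
    then have "card {x, y, t} \<le> card T" using \<open>finite T\<close> xy by (intro card_mono) auto
    moreover have "card {x, y, t} = 3" using t s(2) by auto
    ultimately have "card T \<ge> 4" using \<open>even (card T)\<close> by presburger
    moreover have "graph_iso C E {0..<card T + 2} (K2m_edge (card T))"
    proof (unfold C_eq, rule graph_iso_K2m)
      fix p q assume "p \<in> {a, b} \<union> T" "q \<in> {a, b} \<union> T"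
      then show "E p q \<longleftrightarrow> (p \<in> {a, b} \<and> q \<in> T) \<or> (q \<in> {a, b} \<and> p \<in> T)"
        using a_nbrs[of q] b_nbrs[of q] T_nbrs[of p q] ab by auto
    qed (use s(2) ab \<open>finite T\<close> in auto)
    ultimately show ?thesis using \<open>even (card T)\<close> by blast
  qed
qed

text \<open>Outer vertices attach to only one of the diagonal pairs (square_outer_one_side), so after
  at most one rotation the vertex x has no neighbours outside the square.\<close>

lemma square_component_iso:
  assumes "square a x b y"
  shows "graph_iso C E {0..<4} (cycle_edge 4)
    \<or> (\<exists>m. m \<ge> 4 \<and> even m \<and> graph_iso C E {0..<m+2} (K2m_edge m))"
proof (cases "\<forall>w. E w x \<longrightarrow> w \<in> {a, x, b, y}")
  case True
  then show ?thesis using square_component_iso_closed_side[OF assms] by blast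
next
  case False
  then obtain z where z: "z \<notin> {a, x, b, y}" "E z x" by blast
  have "w \<in> {x, b, y, a}" if "E w b" for w
  proof (rule ccontr)
    assume "w \<notin> {x, b, y, a}"
    then have "E w a" "w \<notin> {a, x, b, y}"
      using square_outer_adjacent_opposite[of b y a x w] assms square_rotate that by auto
    then show False using square_outer_one_side[OF assms _ _ z] by blast
  qed
  then show ?thesis using square_component_iso_closed_side[OF square_rotate[OF assms]] by blast
qed

end

theorem claim4:
  fixes V :: "'a set" and E :: "'a \<Rightarrow> 'a \<Rightarrow> bool" and C :: "'a set"
  assumes "simple_graph V E"
    and "\<forall>v\<in>V. \<exists>u. E v u"
    and "\<forall>v\<in>V. even (degree V E v)"
    and "is_component V E C"
  shows "has_triangle C E \<or> has_path C E 5
    \<or> graph_iso C E {0..<4} (cycle_edge 4)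
    \<or> graph_iso C E {0..<5} (cycle_edge 5)
    \<or> (\<exists>m. m \<ge> 4 \<and> even m \<and> graph_iso C E {0..<m+2} (K2m_edge m))"
proof (cases "has_triangle C E \<or> has_path C E 5")
  case False
  then interpret triangle_P6_free_component V E C
    using assms by unfold_locales auto
  show ?thesis
    using square_or_pentagon square_component_iso pentagon_component_iso by blast
qed blast

end
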